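(* For each $u\in(0,1)$, $\phi(u)=(\mathcal E^c_u)'(G(u)-)=(\mathcal E^c_u)'(S(u)-)$.
   Context: Let $\mu,\nu$ be probability measures on $\mathbb R$ with finite first moments and $\mu\le_{cx}\nu$. Put $P_\eta(k)=\int(k-x)^+\eta(dx)$, $D=P_\nu-P_\mu$, and assume $\{k:D(k)>0\}$ is an interval. Let $G$ be any quantile function of $\mu$. For $u\in(0,1)$ let $\mu_u(A)=\mu(A\cap(-\infty,G(u)))+\big(u-\mu((-\infty,G(u)))\big)\delta_{G(u)}(A)$ and $\mathcal E_u=P_\nu-P_{\mu_u}$. $f^c$ is the largest convex minorant of $f$; $Z^f(y)=\inf\{z\ge y: f^c(z)=f(z)\}$. Define $S(u)=Z^{\mathcal E_u}(G(u))$ and $\phi(u)=\inf\partial\mathcal E_u^c(G(u))$ (subdifferential). $h'(x-)$ denotes the left derivative. *)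

theory Defs
  imports "HOL-Probability.Probability"
begin

definition put_fn :: "real measure \<Rightarrow> real \<Rightarrow> real" where
  "put_fn \<eta> k = (\<integral>x. max 0 (k - x) \<partial>\<eta>)"

definition cx_le :: "real measure \<Rightarrow> real measure \<Rightarrow> bool" where
  "cx_le \<mu> \<nu> \<longleftrightarrow> (\<forall>f::real \<Rightarrow> real. convex_on UNIV f \<longrightarrow> integrable \<mu> f \<longrightarrow> integrable \<nu> f
        \<longrightarrow> (\<integral>x. f x \<partial>\<mu>) \<le> (\<integral>x. f x \<partial>\<nu>))"

definition is_quantile :: "real measure \<Rightarrow> (real \<Rightarrow> real) \<Rightarrow> bool" where
  "is_quantile \<mu> G \<longleftrightarrow> (\<forall>u\<in>{0<..<1}. measure \<mu> {..<G u} \<le> u \<and> u \<le> measure \<mu> {..G u})"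

definition mu_u :: "real measure \<Rightarrow> (real \<Rightarrow> real) \<Rightarrow> real \<Rightarrow> real measure" where
  "mu_u \<mu> G u = measure_of UNIV (sets borel)
     (\<lambda>A. emeasure \<mu> (A \<inter> {..<G u}) + ennreal (u - measure \<mu> {..<G u}) * indicator A (G u))"

definition conv_minorant :: "(real \<Rightarrow> real) \<Rightarrow> real \<Rightarrow> real" where
  "conv_minorant f x = Sup {g x | g. convex_on UNIV g \<and> (\<forall>y. g y \<le> f y)}"

definition Zf :: "(real \<Rightarrow> real) \<Rightarrow> real \<Rightarrow> real" where
  "Zf f y = Inf {z. z \<ge> y \<and> conv_minorant f z = f z}"

definition subdiff :: "(real \<Rightarrow> real) \<Rightarrow> real \<Rightarrow> real set" where
  "subdiff g x = {s. \<forall>z. g z \<ge> g x + s * (z - x)}"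

definition E_u :: "real measure \<Rightarrow> real measure \<Rightarrow> (real \<Rightarrow> real) \<Rightarrow> real \<Rightarrow> real \<Rightarrow> real" where
  "E_u \<mu> \<nu> G u k = put_fn \<nu> k - put_fn (mu_u \<mu> G u) k"

end

theory Submission
  imports Defs
begin

text \<open>Write \<open>c = G u\<close>. As \<open>\<mu>\<^sub>u\<close> agrees with \<open>\<mu>\<close> below \<open>c\<close> and has mass \<open>u\<close>, \<open>P\<^sub>\<mu>\<^sub>u\<close> equals \<open>P\<^sub>\<mu>\<close>
  left of \<open>c\<close> and is affine of slope \<open>u\<close> right of \<open>c\<close>. Hence \<open>\<E>\<^sub>u\<close> lies above a line \<open>L\<close> of slope
  \<open>1 - u\<close>, is asymptotic to it at \<open>+\<infinity>\<close> (the gap is the call price of \<open>\<nu>\<close>) and, by the convex order,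
  exceeds it by at least \<open>(1 - u)(c - x)\<close> left of \<open>c\<close>.

  The first identity holds for every convex function: left difference quotients at \<open>c\<close> increase to
  the least subgradient. For the second, either \<open>\<E>\<^sup>c\<^sub>u(c) = \<E>\<^sub>u(c)\<close>, and then \<open>S(u) = c\<close>, or \<open>\<E>\<^sup>c\<^sub>u < \<E>\<^sub>u\<close>
  on an interval from some \<open>p < c\<close> up to \<open>S(u)\<close>, on which \<open>\<E>\<^sup>c\<^sub>u\<close> is therefore affine, so both left
  derivatives equal its slope. The contact point \<open>S(u)\<close> exists: were \<open>\<E>\<^sup>c\<^sub>u < \<E>\<^sub>u\<close> on all of
  \<open>[c, \<infinity>)\<close>, \<open>\<E>\<^sup>c\<^sub>u\<close> would be affine there and, squeezed between \<open>L\<close> and its asymptote \<open>\<E>\<^sub>u\<close>, equal to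
  \<open>L\<close>; but a small tent over \<open>L\<close> still fits below \<open>\<E>\<^sub>u\<close> at \<open>c\<close>.\<close>

lemma convex_on_max:
  assumes "convex_on S f" "convex_on S g"
  shows "convex_on S (\<lambda>x. max (f x) (g x))"
  unfolding convex_on_def
proof (intro conjI ballI allI impI)
  show "convex S" using assms(1) by (rule convex_on_imp_convex)
  fix x y and u v :: real
  assume "x \<in> S" "y \<in> S" "0 \<le> u" "0 \<le> v" "u + v = 1"
  then have "f (u *\<^sub>R x + v *\<^sub>R y) \<le> u * f x + v * f y" "g (u *\<^sub>R x + v *\<^sub>R y) \<le> u * g x + v * g y"
    using assms unfolding convex_on_def by auto
  moreover have "u * f x + v * f y \<le> u * max (f x) (g x) + v * max (f y) (g y)"
    "u * g x + v * g y \<le> u * max (f x) (g x) + v * max (f y) (g y)"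
    using \<open>0 \<le> u\<close> \<open>0 \<le> v\<close> by (intro add_mono mult_left_mono; simp)+
  ultimately show "max (f (u *\<^sub>R x + v *\<^sub>R y)) (g (u *\<^sub>R x + v *\<^sub>R y))
      \<le> u * max (f x) (g x) + v * max (f y) (g y)"
    by linarith
qed

lemma convex_on_affine:
  assumes "convex S"
  shows "convex_on S (\<lambda>x::real. a * x + b)"
  unfolding convex_on_def
proof (intro conjI ballI allI impI)
  fix x y u v :: real
  assume "u + v = 1"
  then have "b = u * b + v * b" by (metis distrib_right mult_1)
  then show "a * (u *\<^sub>R x + v *\<^sub>R y) + b \<le> u * (a * x + b) + v * (a * y + b)"
    by (simp add: algebra_simps)
qed (fact assms)

lemma diff_divide_diff_swap: "((a::real) - b) / (c - d) = (b - a) / (d - c)"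
  by (metis minus_diff_eq minus_divide_divide)

lemma convex_slope_mono:
  fixes f :: "real \<Rightarrow> real"
  assumes cv: "convex_on UNIV f" and "y \<le> z" "y \<noteq> c" "z \<noteq> c"
  shows "(f y - f c) / (y - c) \<le> (f z - f c) / (z - c)"
proof (cases "y = z")
  case False
  with assms consider "z < c" | "y < c" "c < z" | "c < y" "y < z" by fastforce
  then show ?thesis
  proof cases
    case 1
    with \<open>y \<le> z\<close> False show ?thesis
      using convex_on_slope_le(2)[OF cv _ _ _ 1, of y] by (simp add: diff_divide_diff_swap)
  next
    case 2
    then show ?thesis
      using convex_on_slope_le[OF cv _ _ 2] by (simp add: diff_divide_diff_swap)
  next
    case 3
    then show ?thesis
      using convex_on_slope_le(1)[OF cv _ _ 3] by (simp add: diff_divide_diff_swap)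
  qed
qed simp

lemma convex_chord_le_outside:
  fixes f :: "real \<Rightarrow> real"
  assumes cv: "convex_on UNIV f" and pq: "p < q" and z: "z \<notin> {p<..<q}"
  shows "f p + (f q - f p) / (q - p) * (z - p) \<le> f z"
proof -
  define m where "m = (f q - f p) / (q - p)"
  consider "z < p" | "z = p" | "z = q" | "q < z"
    using z by fastforce
  then have "m * (z - p) \<le> f z - f p"
  proof cases
    case 1
    then have "(f z - f p) / (z - p) \<le> m"
      unfolding m_def using pq by (intro convex_slope_mono[OF cv]) auto
    then show ?thesis using 1 by (simp add: neg_divide_le_eq)
  next
    case 4
    then have "m \<le> (f z - f p) / (z - p)"
      unfolding m_def using pq by (intro convex_slope_mono[OF cv]) auto
    then show ?thesis using pq 4 by (simp add: pos_le_divide_eq)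
  qed (use pq in \<open>simp_all add: m_def\<close>)
  then show ?thesis unfolding m_def by simp
qed

lemma convex_Inf_subdiff_eq_Sup_left_slopes:
  fixes f :: "real \<Rightarrow> real"
  assumes cv: "convex_on UNIV f"
  shows "Inf (subdiff f c) = Sup ((\<lambda>y. (f y - f c) / (y - c)) ` {..<c})"
proof -
  define q where "q y = (f y - f c) / (y - c)" for y
  have left_le_right: "q y \<le> q z" if "y < c" "c < z" for y z
    unfolding q_def using that by (intro convex_slope_mono[OF cv]) auto
  have bdd: "bdd_above (q ` {..<c})"
    using left_le_right[of _ "c + 1"] by (intro bdd_aboveI[of _ "q (c + 1)"]) auto
  define slope where "slope = Sup (q ` {..<c})"
  have "slope \<in> subdiff f c"
    unfolding subdiff_def
  proof safe
    fix z
    show "f c + slope * (z - c) \<le> f z"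
    proof (cases z c rule: linorder_cases)
      case less
      have "q z \<le> slope" unfolding slope_def using bdd less by (intro cSup_upper) auto
      then show ?thesis using less by (simp add: q_def divide_le_eq mult.commute)
    next
      case greater
      have "slope \<le> q z" unfolding slope_def
        by (rule cSup_least) (use greater left_le_right in auto)
      then show ?thesis using greater by (simp add: q_def le_divide_eq)
    qed simp
  qed
  moreover have "slope \<le> s" if "s \<in> subdiff f c" for s
    unfolding slope_def
  proof (rule cSup_least)
    fix x assume "x \<in> q ` {..<c}"
    then obtain y where "y < c" "x = q y" by auto
    moreover have "f c + s * (y - c) \<le> f y" using that unfolding subdiff_def by auto
    ultimately show "x \<le> s" by (simp add: q_def divide_le_eq mult.commute)
  qed auto
  ultimately show ?thesis unfolding slope_def q_def by (intro cInf_eq_minimum)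
qed

lemma convex_left_slope_tendsto_Inf_subdiff:
  fixes f :: "real \<Rightarrow> real"
  assumes cv: "convex_on UNIV f"
  shows "((\<lambda>y. (f y - f c) / (y - c)) \<longlongrightarrow> Inf (subdiff f c)) (at_left c)"
proof -
  define q where "q y = (f y - f c) / (y - c)" for y
  have "q y1 \<le> q y2" if "y1 \<le> y2" "y2 \<noteq> c" "y1 \<noteq> c" for y1 y2
    unfolding q_def using that by (intro convex_slope_mono[OF cv])
  then have "(q \<longlongrightarrow> Sup (q ` {..<c})) (at_left c)"
    using Lim_left_bound[of UNIV c q "q (c + 1)"] by simp
  then show ?thesis
    unfolding convex_Inf_subdiff_eq_Sup_left_slopes[OF cv] q_def .
qed

lemma left_slope_tendsto_if_affine:
  fixes f :: "real \<Rightarrow> real"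
  assumes "p < q" and affine: "\<And>x. p \<le> x \<Longrightarrow> x \<le> q \<Longrightarrow> f x = f p + s * (x - p)"
  shows "((\<lambda>y. (f y - f q) / (y - q)) \<longlongrightarrow> s) (at_left q)"
proof (rule Lim_transform_eventually[OF tendsto_const])
  have "eventually (\<lambda>y. p < y \<and> y < q) (at_left q)"
    unfolding eventually_at_left_field using \<open>p < q\<close> by (intro exI[of _ p]) auto
  then show "eventually (\<lambda>y. s = (f y - f q) / (y - q)) (at_left q)"
  proof eventually_elim
    case (elim y)
    then have "f y - f q = s * (y - q)" using affine[of y] affine[of q] \<open>p < q\<close> by (simp add: algebra_simps)
    then show ?case using elim by simp
  qed
qed

lemma conv_minorant_greatest:
  assumes "convex_on UNIV g" "\<And>y. g y \<le> f y"
  shows "g x \<le> conv_minorant f x"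
  unfolding conv_minorant_def
  by (rule cSup_upper) (use assms in \<open>auto intro!: bdd_aboveI[where M="f x"]\<close>)

lemma conv_minorant_le:
  assumes "convex_on UNIV g" "\<And>y. g y \<le> f y"
  shows "conv_minorant f x \<le> f x"
  unfolding conv_minorant_def
  by (rule cSup_least) (use assms in auto)

lemma convex_conv_minorant:
  assumes "convex_on UNIV g" "\<And>y. g y \<le> f y"
  shows "convex_on UNIV (conv_minorant f)"
  unfolding convex_on_def
proof (intro conjI ballI allI impI)
  fix x y u v :: real
  assume uv: "0 \<le> u" "0 \<le> v" "u + v = 1"
  show "conv_minorant f (u *\<^sub>R x + v *\<^sub>R y) \<le> u * conv_minorant f x + v * conv_minorant f y"
    unfolding conv_minorant_def[of f "u *\<^sub>R x + v *\<^sub>R y"]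
  proof (rule cSup_least)
    fix z assume "z \<in> {h (u *\<^sub>R x + v *\<^sub>R y) |h. convex_on UNIV h \<and> (\<forall>y. h y \<le> f y)}"
    then obtain h where h: "convex_on UNIV h" "\<And>y. h y \<le> f y" "z = h (u *\<^sub>R x + v *\<^sub>R y)"
      by auto
    have "z \<le> u * h x + v * h y" using h uv unfolding convex_on_def by auto
    also have "\<dots> \<le> u * conv_minorant f x + v * conv_minorant f y"
      using conv_minorant_greatest[OF h(1,2)] uv by (intro add_mono mult_left_mono) auto
    finally show "z \<le> u * conv_minorant f x + v * conv_minorant f y" .
  qed (use assms in auto)
qed simp

text \<open>Otherwise the chord, lowered until it touches \<open>E\<close> on \<open>[p, q]\<close>, would give a larger convex
  minorant.\<close>

lemma conv_minorant_affine_on_gap: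
  fixes E :: "real \<Rightarrow> real"
  assumes contE: "continuous_on UNIV E" and g: "convex_on UNIV g" "\<And>y. g y \<le> E y"
    and pq: "p < q" and gap: "\<And>x. p < x \<Longrightarrow> x < q \<Longrightarrow> conv_minorant E x < E x"
    and x: "x \<in> {p..q}"
  shows "conv_minorant E x = conv_minorant E p + (conv_minorant E q - conv_minorant E p) / (q - p) * (x - p)"
proof -
  define \<Phi> where "\<Phi> = conv_minorant E"
  define m where "m = (\<Phi> q - \<Phi> p) / (q - p)"
  define l where "l z = m * z + (\<Phi> p - m * p)" for z
  have cv: "convex_on UNIV \<Phi>" unfolding \<Phi>_def using convex_conv_minorant[OF g] .
  have \<Phi>_le: "\<Phi> z \<le> E z" for z unfolding \<Phi>_def using conv_minorant_le[OF g] .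
  have "m * (q - p) = \<Phi> q - \<Phi> p" unfolding m_def using pq by simp
  then have l_ends: "l p = \<Phi> p" "l q = \<Phi> q" unfolding l_def by (simp_all add: algebra_simps)
  have chord_above: "\<Phi> z \<le> l z" if "z \<in> {p..q}" for z
    using convex_onD_Icc'[OF convex_on_subset[OF cv] that] by (simp add: l_def right_diff_distrib flip: m_def)
  have chord_below: "l z \<le> \<Phi> z" if "z \<notin> {p<..<q}" for z
    using convex_chord_le_outside[OF cv pq that] by (simp add: l_def right_diff_distrib flip: m_def)
  have \<Phi>_greatest: "h z \<le> \<Phi> z" if "convex_on UNIV h" "\<And>y. h y \<le> E y" for h z
    unfolding \<Phi>_def using conv_minorant_greatest[OF that] .
  have "continuous_on {p..q} (\<lambda>z. l z - E z)"
    unfolding l_def by (intro continuous_intros continuous_on_subset[OF contE]) auto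
  then have "\<exists>y0\<in>{p..q}. \<forall>y\<in>{p..q}. l y - E y \<le> l y0 - E y0"
    by (intro continuous_attains_sup) (use pq in auto)
  then obtain y0 where y0: "y0 \<in> {p..q}" "\<And>y. y \<in> {p..q} \<Longrightarrow> l y - E y \<le> l y0 - E y0"
    by blast
  define t where "t = max 0 (l y0 - E y0)"
  have "convex_on UNIV (\<lambda>z. max (\<Phi> z) (m * z + (\<Phi> p - m * p - t)))"
    by (intro convex_on_max cv convex_on_affine) simp
  moreover have "max (\<Phi> z) (m * z + (\<Phi> p - m * p - t)) \<le> E z" for z
  proof (cases "z \<in> {p<..<q}")
    case True
    then have "l z - E z \<le> l y0 - E y0" using y0(2) by auto
    then show ?thesis using \<Phi>_le[of z] by (simp add: l_def t_def)
  next
    case False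
    then show ?thesis using chord_below[of z] \<Phi>_le[of z] by (simp add: l_def t_def)
  qed
  ultimately have "max (\<Phi> z) (m * z + (\<Phi> p - m * p - t)) \<le> \<Phi> z" for z
    by (rule \<Phi>_greatest)
  then have lowered_below: "l z - t \<le> \<Phi> z" for z
    by (simp add: l_def add_diff_eq)
  have "t = 0"
  proof (rule ccontr)
    assume "t \<noteq> 0"
    then have "E y0 \<le> \<Phi> y0" using lowered_below[of y0] unfolding t_def by auto
    then have "y0 = p \<or> y0 = q" using gap[of y0] y0(1) unfolding \<Phi>_def by fastforce
    then have "l y0 \<le> E y0" using l_ends \<Phi>_le by auto
    with \<open>t \<noteq> 0\<close> show False unfolding t_def by simp
  qed
  then show ?thesis
    using chord_above[OF x] lowered_below[of x] by (simp add: l_def right_diff_distrib flip: \<Phi>_def m_def)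
qed

lemma affine_seq_tendsto_zero:
  assumes "(\<lambda>n. \<alpha> + \<beta> * real n) \<longlonglongrightarrow> 0"
  shows "\<alpha> = 0" "\<beta> = 0"
proof -
  have "(\<lambda>n. (\<alpha> + \<beta> * real (Suc n)) - (\<alpha> + \<beta> * real n)) \<longlonglongrightarrow> 0 - 0"
    using assms by (intro tendsto_diff LIMSEQ_Suc)
  then show "\<beta> = 0" by (simp add: algebra_simps LIMSEQ_const_iff)
  with assms show "\<alpha> = 0" by (simp add: LIMSEQ_const_iff)
qed

text \<open>A tent of height \<open>\<epsilon>\<close> over \<open>c\<close> fits between the line and \<open>E\<close>: near \<open>c\<close> by compactness,
  far to the left by the linear gap.\<close>

lemma affine_less_conv_minorant:
  fixes E :: "real \<Rightarrow> real"
  assumes contE: "continuous_on UNIV E"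
    and line_le: "\<And>x. a * x + b \<le> E x"
    and k: "0 < k" and gap_left: "\<And>x. x \<le> c \<Longrightarrow> k * (c - x) \<le> E x - (a * x + b)"
    and gap_right: "\<And>x. c \<le> x \<Longrightarrow> x \<le> c + 1 \<Longrightarrow> a * x + b < E x"
  shows "a * c + b < conv_minorant E c"
proof -
  define L where "L x = a * x + b" for x
  have pos: "0 < E x - L x" if "x \<in> {c - 1..c + 1}" for x
  proof (cases "x < c")
    case True
    then have "0 < k * (c - x)" using k by simp
    with gap_left[of x] True show ?thesis by (simp add: L_def)
  next
    case False
    with gap_right[of x] that show ?thesis by (simp add: L_def)
  qed
  have "continuous_on {c - 1..c + 1} (\<lambda>x. E x - L x)"
    unfolding L_def by (intro continuous_intros continuous_on_subset[OF contE]) auto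
  then have "\<exists>y\<in>{c - 1..c + 1}. \<forall>x\<in>{c - 1..c + 1}. E y - L y \<le> E x - L x"
    by (intro continuous_attains_inf) auto
  then obtain y1 where y1: "y1 \<in> {c - 1..c + 1}" "\<And>x. x \<in> {c - 1..c + 1} \<Longrightarrow> E y1 - L y1 \<le> E x - L x"
    by blast
  define \<epsilon> where "\<epsilon> = min (E y1 - L y1) k / 2"
  have \<epsilon>: "0 < \<epsilon>" "2 * \<epsilon> \<le> E y1 - L y1" "2 * \<epsilon> \<le> k"
    unfolding \<epsilon>_def using pos[OF y1(1)] k by auto
  define h where "h x = L x + max 0 (\<epsilon> * (c + 1 - x))" for x
  have "convex_on UNIV (\<lambda>x. max (0 * x + 0) ((- \<epsilon>) * x + \<epsilon> * (c + 1)))"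
    by (intro convex_on_max convex_on_affine) auto
  then have "convex_on UNIV h"
    unfolding h_def L_def by (intro convex_on_add convex_on_affine) (auto simp: algebra_simps)
  moreover have "h x \<le> E x" for x
  proof -
    consider "c + 1 \<le> x" | "x \<in> {c - 1..c + 1}" | "x < c - 1" by fastforce
    then have "max 0 (\<epsilon> * (c + 1 - x)) \<le> E x - L x"
    proof cases
      case 1
      then show ?thesis using \<epsilon>(1) line_le[of x] by (simp add: L_def mult_nonneg_nonpos)
    next
      case 2
      then have "\<epsilon> * (c + 1 - x) \<le> \<epsilon> * 2" using \<epsilon>(1) by (intro mult_left_mono) auto
      then show ?thesis using \<epsilon>(2) y1(2)[OF 2] line_le[of x] by (simp add: L_def)
    next
      case 3
      then have "\<epsilon> * (c + 1 - x) \<le> \<epsilon> * (2 * (c - x))" using \<epsilon>(1) by (intro mult_left_mono) auto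
      also have "\<dots> = (2 * \<epsilon>) * (c - x)" by simp
      also have "\<dots> \<le> k * (c - x)" using 3 \<epsilon>(3) by (intro mult_right_mono) auto
      finally show ?thesis using gap_left[of x] 3 line_le[of x] by (simp add: L_def)
    qed
    then show ?thesis unfolding h_def by linarith
  qed
  ultimately have "h c \<le> conv_minorant E c" by (rule conv_minorant_greatest)
  then show ?thesis using \<epsilon>(1) by (simp add: h_def L_def)
qed

locale line_asymptote =
  fixes E :: "real \<Rightarrow> real" and a b c k :: real
  assumes continuous_E: "continuous_on UNIV E"
    and line_le: "\<And>x. a * x + b \<le> E x"
    and k_pos: "0 < k"
    and gap_left: "\<And>x. x \<le> c \<Longrightarrow> k * (c - x) \<le> E x - (a * x + b)"
    and gap_tendsto_zero: "(\<lambda>n. E (real n) - (a * real n + b)) \<longlonglongrightarrow> 0"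
begin

abbreviation \<Phi> :: "real \<Rightarrow> real" where "\<Phi> \<equiv> conv_minorant E"

lemma convex_line: "convex_on UNIV (\<lambda>x. a * x + b)"
  by (rule convex_on_affine) simp

lemma convex_\<Phi>: "convex_on UNIV \<Phi>"
  using convex_conv_minorant[OF convex_line line_le] .

lemma \<Phi>_le: "\<Phi> x \<le> E x"
  using conv_minorant_le[OF convex_line line_le] .

lemma line_le_\<Phi>: "a * x + b \<le> \<Phi> x"
  using conv_minorant_greatest[OF convex_line line_le] .

lemma continuous_\<Phi>: "continuous_on UNIV \<Phi>"
  using convex_on_continuous[OF open_UNIV convex_\<Phi>] .

lemmas \<Phi>_affine_on_gap = conv_minorant_affine_on_gap[OF continuous_E convex_line line_le]

lemma exists_contact_ge: "\<exists>z\<ge>c. \<Phi> z = E z"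
proof (rule ccontr)
  assume "\<not> ?thesis"
  then have below: "\<Phi> z < E z" if "c \<le> z" for z
    using \<Phi>_le[of z] that by force
  define s where "s = \<Phi> (c + 1) - \<Phi> c"
  have affine: "\<Phi> x = \<Phi> c + s * (x - c)" if "c + 1 \<le> x" for x
  proof -
    have "\<Phi> (c + 1) = \<Phi> c + (\<Phi> x - \<Phi> c) / (x - c) * 1"
      using \<Phi>_affine_on_gap[of c x "c + 1"] that below by simp
    then show ?thesis using that by (simp add: s_def field_simps)
  qed
  have "eventually (\<lambda>n. c + 1 \<le> real n) sequentially"
    using filterlim_real_sequentially by (simp add: filterlim_at_top)
  then have "eventually (\<lambda>n. \<Phi> (real n) - (a * real n + b) = (\<Phi> c - s * c - b) + (s - a) * real n) sequentially"
    by eventually_elim (simp add: affine algebra_simps)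
  moreover have "(\<lambda>n. \<Phi> (real n) - (a * real n + b)) \<longlonglongrightarrow> 0"
    using line_le_\<Phi> \<Phi>_le by (intro tendsto_sandwich[OF _ _ tendsto_const gap_tendsto_zero]) auto
  ultimately have "(\<lambda>n. (\<Phi> c - s * c - b) + (s - a) * real n) \<longlonglongrightarrow> 0"
    by (rule Lim_transform_eventually[rotated])
  from affine_seq_tendsto_zero[OF this] have "\<Phi> c = a * c + b"
    by (simp add: algebra_simps)
  moreover have "a * c + b < \<Phi> c"
    using affine_less_conv_minorant[OF continuous_E line_le k_pos gap_left] below line_le_\<Phi>
    by (meson le_less_trans)
  ultimately show False by simp
qed

lemma Zf_contact:
  shows "c \<le> Zf E c" and "\<Phi> (Zf E c) = E (Zf E c)"
    and "\<And>y. c \<le> y \<Longrightarrow> y < Zf E c \<Longrightarrow> \<Phi> y < E y"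
proof -
  define T where "T = {z. c \<le> z \<and> \<Phi> z = E z}"
  have Zf_eq: "Zf E c = Inf T" unfolding Zf_def T_def ..
  have "closed T"
    unfolding T_def using continuous_\<Phi> continuous_E
    by (intro closed_Collect_conj closed_Collect_le closed_Collect_eq continuous_intros) auto
  moreover have "T \<noteq> {}" "bdd_below T"
    using exists_contact_ge unfolding T_def by (auto intro: bdd_belowI[of _ c])
  ultimately have "Zf E c \<in> T" unfolding Zf_eq by (rule closed_contains_Inf[rotated -1])
  then show "c \<le> Zf E c" "\<Phi> (Zf E c) = E (Zf E c)" unfolding T_def by auto
  fix y assume "c \<le> y" "y < Zf E c"
  then have "y \<notin> T" using cInf_lower[OF _ \<open>bdd_below T\<close>, of y] unfolding Zf_eq by force
  then show "\<Phi> y < E y" using \<open>c \<le> y\<close> \<Phi>_le[of y] unfolding T_def by force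
qed

lemma left_slope_tendsto_at_Zf:
  "((\<lambda>y. (\<Phi> y - \<Phi> (Zf E c)) / (y - Zf E c)) \<longlongrightarrow> Inf (subdiff \<Phi> c)) (at_left (Zf E c))"
proof (cases "\<Phi> c = E c")
  case True
  then have "Zf E c = c" using Zf_contact(1) Zf_contact(3)[of c] by force
  then show ?thesis using convex_left_slope_tendsto_Inf_subdiff[OF convex_\<Phi>] by simp
next
  case False
  define Z where "Z = Zf E c"
  have "c < Z" using Zf_contact(1,2) False unfolding Z_def by (metis order_le_less)
  have "isCont (\<lambda>x. E x - \<Phi> x) c"
    using continuous_E continuous_\<Phi> by (intro continuous_intros) (simp_all add: continuous_on_eq_continuous_at)
  then have "((\<lambda>x. E x - \<Phi> x) \<longlongrightarrow> E c - \<Phi> c) (at_left c)"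
    unfolding isCont_def by (rule tendsto_within_subset) simp
  moreover have "0 < E c - \<Phi> c" using False \<Phi>_le[of c] by simp
  ultimately have "eventually (\<lambda>x. 0 < E x - \<Phi> x) (at_left c)" by (rule order_tendstoD)
  then obtain p where "p < c" and near_c: "\<And>y. p < y \<Longrightarrow> y < c \<Longrightarrow> \<Phi> y < E y"
    unfolding eventually_at_left_field by auto
  have gap: "\<Phi> y < E y" if "p < y" "y < Z" for y
    using near_c[of y] Zf_contact(3)[of y] False \<Phi>_le[of y] that unfolding Z_def
    by (cases y c rule: linorder_cases) auto
  define s where "s = (\<Phi> Z - \<Phi> p) / (Z - p)"
  have affine: "\<Phi> x = \<Phi> p + s * (x - p)" if "p \<le> x" "x \<le> Z" for x
    unfolding s_def by (rule \<Phi>_affine_on_gap) (use gap that \<open>p < c\<close> \<open>c < Z\<close> in auto)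
  have "((\<lambda>y. (\<Phi> y - \<Phi> c) / (y - c)) \<longlongrightarrow> s) (at_left c)"
    by (rule left_slope_tendsto_if_affine[OF \<open>p < c\<close>], rule affine) (use \<open>c < Z\<close> in auto)
  then have "s = Inf (subdiff \<Phi> c)"
    using convex_left_slope_tendsto_Inf_subdiff[OF convex_\<Phi>] by (rule tendsto_unique[rotated]) simp
  moreover have "((\<lambda>y. (\<Phi> y - \<Phi> Z) / (y - Z)) \<longlongrightarrow> s) (at_left Z)"
    using \<open>p < c\<close> \<open>c < Z\<close> by (intro left_slope_tendsto_if_affine[of p] affine) auto
  ultimately show ?thesis unfolding Z_def by simp
qed

end

locale integrable_real_distribution = real_distribution +
  assumes integrable_id: "integrable M (\<lambda>x. x)"
begin

lemma integrable_put_payoff: "integrable M (\<lambda>x. max 0 (k - x))"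
proof (rule Bochner_Integration.integrable_bound)
  show "integrable M (\<lambda>x. \<bar>k\<bar> + \<bar>x\<bar>)" using integrable_id by auto
  show "AE x in M. norm (max 0 (k - x)) \<le> norm (\<bar>k\<bar> + \<bar>x\<bar>)" by auto
qed measurable

lemma prob_UNIV [simp]: "prob UNIV = 1"
  using prob_space by simp

lemma integral_const_minus_id: "(\<integral>x. k - x \<partial>M) = k - (\<integral>x. x \<partial>M)"
  using integrable_id by simp

lemma put_fn_lipschitz: "\<bar>put_fn M k - put_fn M k'\<bar> \<le> \<bar>k - k'\<bar>"
proof -
  have diff: "put_fn M k - put_fn M k' = (\<integral>x. max 0 (k - x) - max 0 (k' - x) \<partial>M)"
    unfolding put_fn_def by (rule Bochner_Integration.integral_diff[symmetric]) (rule integrable_put_payoff)+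
  have "integrable M (\<lambda>x. max 0 (k - x) - max 0 (k' - x))"
    using integrable_put_payoff by auto
  then have "(\<integral>x. max 0 (k - x) - max 0 (k' - x) \<partial>M) \<le> (\<integral>x. \<bar>k - k'\<bar> \<partial>M)"
    and "(\<integral>x. - \<bar>k - k'\<bar> \<partial>M) \<le> (\<integral>x. max 0 (k - x) - max 0 (k' - x) \<partial>M)"
    by (intro integral_mono; auto)+
  then show ?thesis unfolding diff by simp
qed

lemma continuous_put_fn: "continuous_on UNIV (put_fn M)"
  by (rule lipschitz_on_continuous_on[of 1], rule lipschitz_onI) (auto simp: dist_real_def put_fn_lipschitz)

lemma put_fn_ge: "k - (\<integral>x. x \<partial>M) \<le> put_fn M k"
  unfolding put_fn_def integral_const_minus_id[symmetric]
  using integrable_id integrable_put_payoff by (intro integral_mono) auto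

lemma put_call_parity: "put_fn M k - k + (\<integral>x. x \<partial>M) = (\<integral>x. max 0 (x - k) \<partial>M)"
proof -
  have "(\<integral>x. max 0 (x - k) \<partial>M) = (\<integral>x. max 0 (k - x) - (k - x) \<partial>M)"
    by (rule Bochner_Integration.integral_cong) auto
  also have "\<dots> = put_fn M k - (\<integral>x. k - x \<partial>M)"
    unfolding put_fn_def using integrable_id integrable_put_payoff by (intro Bochner_Integration.integral_diff) auto
  finally show ?thesis by (simp add: integral_const_minus_id)
qed

lemma call_tendsto_zero: "(\<lambda>n. put_fn M (real n) - real n + (\<integral>x. x \<partial>M)) \<longlonglongrightarrow> 0"
proof -
  have "(\<lambda>n. \<integral>x. max 0 (x - real n) \<partial>M) \<longlonglongrightarrow> (\<integral>x. 0 \<partial>M)"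
  proof (rule integral_dominated_convergence[where w="\<lambda>x. \<bar>x\<bar>"])
    show "AE x in M. (\<lambda>n. max 0 (x - real n)) \<longlonglongrightarrow> 0"
    proof (rule AE_I2)
      fix x :: real
      have "eventually (\<lambda>n. x \<le> real n) sequentially"
        using filterlim_real_sequentially by (simp add: filterlim_at_top)
      then have "eventually (\<lambda>n. max 0 (x - real n) = 0) sequentially"
        by (rule eventually_mono) simp
      then show "(\<lambda>n. max 0 (x - real n)) \<longlonglongrightarrow> 0" by (rule tendsto_eventually)
    qed
    show "integrable M (\<lambda>x. \<bar>x\<bar>)" using integrable_id by simp
    show "AE x in M. norm (max 0 (x - real n)) \<le> \<bar>x\<bar>" for n by auto
  qed measurable
  then show ?thesis by (simp add: put_call_parity)
qed

end

definition cut_density :: "real measure \<Rightarrow> real \<Rightarrow> real \<Rightarrow> real \<Rightarrow> real" where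
  "cut_density M c u x = indicator {..<c} x + (u - measure M {..<c}) / measure M {c} * indicator {c} x"

lemma borel_measurable_cut_density [measurable]: "cut_density M c u \<in> borel_measurable borel"
  unfolding cut_density_def by measurable

context integrable_real_distribution
begin

text \<open>If \<open>M {c} = 0\<close> the weight of the atom is the junk value \<open>0\<close>, but then \<open>u = M (-\<infinity>, c)\<close> anyway.\<close>

lemma cut_atom_weight:
  assumes "measure M {..<c} \<le> u" "u \<le> measure M {..c}"
  shows "0 \<le> (u - measure M {..<c}) / measure M {c}"
    and "(u - measure M {..<c}) / measure M {c} * measure M {c} = u - measure M {..<c}"
proof -
  have "measure M {..c} = measure M ({..<c} \<union> {c})" by (metis ivl_disj_un_singleton(2))
  also have "\<dots> = measure M {..<c} + measure M {c}" by (rule finite_measure_Union) auto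
  finally show "0 \<le> (u - measure M {..<c}) / measure M {c}"
    and "(u - measure M {..<c}) / measure M {c} * measure M {c} = u - measure M {..<c}"
    using assms by auto
qed

lemma cut_density_nonneg: "measure M {..<c} \<le> u \<Longrightarrow> 0 \<le> cut_density M c u x"
  by (simp add: cut_density_def)

lemma integrable_cut_density_mult:
  assumes "integrable M f"
  shows "integrable M (\<lambda>x. cut_density M c u x * f x)"
proof -
  let ?\<theta> = "(u - measure M {..<c}) / measure M {c}"
  have "integrable M (\<lambda>x. f x * indicator {..<c} x + ?\<theta> * (f x * indicator {c} x))"
    using assms by (intro Bochner_Integration.integrable_add Bochner_Integration.integrable_mult_right
        integrable_real_mult_indicator) auto
  moreover have "(\<lambda>x. f x * indicator {..<c} x + ?\<theta> * (f x * indicator {c} x)) = (\<lambda>x. cut_density M c u x * f x)"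
    by (auto simp: cut_density_def algebra_simps)
  ultimately show ?thesis by simp
qed

lemma integral_cut_density:
  assumes "measure M {..<c} \<le> u" "u \<le> measure M {..c}"
  shows "(\<integral>x. cut_density M c u x \<partial>M) = u"
  unfolding cut_density_def using cut_atom_weight(2)[OF assms] by (simp add: emeasure_eq_measure)

lemma mu_u_eq_density:
  assumes "measure M {..<G u} \<le> u" "u \<le> measure M {..G u}"
  shows "mu_u M G u = density M (cut_density M (G u) u)"
proof -
  let ?\<theta> = "(u - measure M {..<G u}) / measure M {G u}"
  have "density M (cut_density M (G u) u)
      = measure_of UNIV (sets borel) (emeasure (density M (cut_density M (G u) u)))"
    using measure_of_of_measure[of "density M (cut_density M (G u) u)"] by simp
  also have "\<dots> = mu_u M G u"
    unfolding mu_u_def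
  proof (rule measure_of_eq)
    fix A :: "real set" assume "A \<in> sigma_sets UNIV (sets borel)"
    then have A: "A \<in> sets borel" by (metis sets.sigma_sets_eq space_borel)
    have "emeasure (density M (cut_density M (G u) u)) A
        = (\<integral>\<^sup>+ x. ennreal (cut_density M (G u) u x) * indicator A x \<partial>M)"
      using A by (intro emeasure_density) auto
    also have "\<dots> = (\<integral>\<^sup>+ x. indicator (A \<inter> {..<G u}) x + ennreal ?\<theta> * indicator (A \<inter> {G u}) x \<partial>M)"
      by (rule nn_integral_cong) (auto simp: cut_density_def indicator_def)
    also have "\<dots> = emeasure M (A \<inter> {..<G u}) + ennreal ?\<theta> * emeasure M (A \<inter> {G u})"
      using A by (simp add: nn_integral_add nn_integral_cmult)
    also have "\<dots> = emeasure M (A \<inter> {..<G u}) + ennreal (u - measure M {..<G u}) * indicator A (G u)"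
      using cut_atom_weight[OF assms]
      by (cases "G u \<in> A") (auto simp: emeasure_eq_measure Int_absorb1 simp flip: ennreal_mult)
    finally show "emeasure (density M (cut_density M (G u) u)) A
        = emeasure M (A \<inter> {..<G u}) + ennreal (u - measure M {..<G u}) * indicator A (G u)" .
  qed auto
  finally show ?thesis ..
qed

text \<open>\<open>\<mu>\<^sub>u\<close> agrees with \<open>M\<close> on \<open>(-\<infinity>, G u)\<close> and has total mass \<open>u\<close>, all of it on \<open>(-\<infinity>, G u]\<close>.\<close>

lemma put_fn_mu_u:
  assumes "measure M {..<G u} \<le> u" "u \<le> measure M {..G u}"
  shows "put_fn (mu_u M G u) k = put_fn M (min k (G u)) + u * max 0 (k - G u)"
proof -
  let ?g = "cut_density M (G u) u"
  have payoff: "?g x * max 0 (k - x) = ?g x * max 0 (min k (G u) - x) + max 0 (k - G u) * ?g x" for x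
    by (cases x "G u" rule: linorder_cases) (auto simp: cut_density_def)
  have "put_fn (mu_u M G u) k = (\<integral>x. ?g x * max 0 (k - x) \<partial>M)"
    unfolding put_fn_def mu_u_eq_density[of G u, OF assms]
    using cut_density_nonneg[OF assms(1)] by (subst integral_density) auto
  also have "\<dots> = (\<integral>x. ?g x * max 0 (min k (G u) - x) \<partial>M) + max 0 (k - G u) * u"
    unfolding payoff using integral_cut_density[OF assms]
    by (simp add: integrable_cut_density_mult integrable_put_payoff integrable_cut_density_mult[of "\<lambda>_. 1", simplified])
  also have "(\<integral>x. ?g x * max 0 (min k (G u) - x) \<partial>M) = put_fn M (min k (G u))"
    unfolding put_fn_def
    by (rule Bochner_Integration.integral_cong) (auto simp: cut_density_def split: split_indicator)
  finally show ?thesis by simp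
qed

end

lemma cx_leD:
  "cx_le \<mu> \<nu> \<Longrightarrow> convex_on UNIV f \<Longrightarrow> integrable \<mu> f \<Longrightarrow> integrable \<nu> f \<Longrightarrow> (\<integral>x. f x \<partial>\<mu>) \<le> (\<integral>x. f x \<partial>\<nu>)"
  unfolding cx_le_def by blast

lemma cx_le_mean_eq:
  assumes "integrable_real_distribution \<mu>" "integrable_real_distribution \<nu>" "cx_le \<mu> \<nu>"
  shows "(\<integral>x. x \<partial>\<mu>) = (\<integral>x. x \<partial>\<nu>)"
proof -
  have "(\<integral>x. a * x \<partial>\<mu>) \<le> (\<integral>x. a * x \<partial>\<nu>)" for a
  proof (rule cx_leD[OF assms(3)])
    show "convex_on UNIV (\<lambda>x. a * x)" using convex_on_affine[of UNIV a 0] by simp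
    show "integrable \<mu> (\<lambda>x. a * x)" "integrable \<nu> (\<lambda>x. a * x)"
      using integrable_real_distribution.integrable_id[OF assms(1)]
        integrable_real_distribution.integrable_id[OF assms(2)] by simp_all
  qed
  from this[of 1] this[of "-1"] show ?thesis by simp
qed

lemma cx_le_put_fn_le:
  assumes "integrable_real_distribution \<mu>" "integrable_real_distribution \<nu>" "cx_le \<mu> \<nu>"
  shows "put_fn \<mu> k \<le> put_fn \<nu> k"
  unfolding put_fn_def
proof (rule cx_leD[OF assms(3)])
  have "convex_on UNIV (\<lambda>x::real. max (0 * x + 0) ((- 1) * x + k))"
    by (intro convex_on_max convex_on_affine) auto
  then show "convex_on UNIV (\<lambda>x::real. max 0 (k - x))" by simp
  show "integrable \<mu> (\<lambda>x. max 0 (k - x))" "integrable \<nu> (\<lambda>x. max 0 (k - x))"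
    using integrable_real_distribution.integrable_put_payoff[OF assms(1)]
      integrable_real_distribution.integrable_put_payoff[OF assms(2)] .
qed

text \<open>Right of \<open>c = G u\<close> the gap between \<open>E\<^sub>u\<close> and the line is the call price of \<open>\<nu>\<close>; left of \<open>c\<close> it
  exceeds \<open>(1 - u) (c - x)\<close> because \<open>P\<^sub>\<mu> \<le> P\<^sub>\<nu>\<close> and \<open>P\<^sub>\<mu>(c) \<ge> c - mean\<close>.\<close>

lemma line_asymptote_E_u:
  assumes \<mu>: "integrable_real_distribution \<mu>" and \<nu>: "integrable_real_distribution \<nu>" and cx: "cx_le \<mu> \<nu>"
    and quantile: "measure \<mu> {..<G u} \<le> u" "u \<le> measure \<mu> {..G u}" and "u < 1"
  shows "line_asymptote (E_u \<mu> \<nu> G u) (1 - u) (u * G u - put_fn \<mu> (G u) - (\<integral>x. x \<partial>\<nu>)) (G u) (1 - u)"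
proof -
  interpret \<mu>: integrable_real_distribution \<mu> by (fact \<mu>)
  interpret \<nu>: integrable_real_distribution \<nu> by (fact \<nu>)
  define c where "c = G u"
  define b where "b = u * c - put_fn \<mu> c - (\<integral>x. x \<partial>\<nu>)"
  have E: "E_u \<mu> \<nu> G u = (\<lambda>x. put_fn \<nu> x - (put_fn \<mu> (min x c) + u * max 0 (x - c)))"
    by (auto simp: E_u_def c_def \<mu>.put_fn_mu_u[of G u, OF quantile])
  have gap_right: "E_u \<mu> \<nu> G u x - ((1 - u) * x + b) = put_fn \<nu> x - x + (\<integral>x. x \<partial>\<nu>)" if "c \<le> x" for x
    using that unfolding E b_def by (simp add: algebra_simps)
  have gap_left: "(1 - u) * (c - x) \<le> E_u \<mu> \<nu> G u x - ((1 - u) * x + b)" if "x \<le> c" for x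
  proof -
    have "E_u \<mu> \<nu> G u x - ((1 - u) * x + b)
        = (put_fn \<nu> x - put_fn \<mu> x) + (1 - u) * (c - x) + (put_fn \<mu> c - (c - (\<integral>x. x \<partial>\<mu>)))"
      using that cx_le_mean_eq[OF \<mu> \<nu> cx] unfolding E b_def by (simp add: algebra_simps)
    then show ?thesis using cx_le_put_fn_le[OF \<mu> \<nu> cx, of x] \<mu>.put_fn_ge[of c] by simp
  qed
  show ?thesis
    unfolding c_def[symmetric] b_def[symmetric]
  proof
    have "continuous_on UNIV (\<lambda>x. put_fn \<mu> (min x c))"
      by (rule continuous_on_compose2[OF \<mu>.continuous_put_fn]) (auto intro: continuous_intros)
    then show "continuous_on UNIV (E_u \<mu> \<nu> G u)"
      unfolding E using \<nu>.continuous_put_fn by (intro continuous_intros)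
    show "(1 - u) * x + b \<le> E_u \<mu> \<nu> G u x" for x
    proof (cases "c \<le> x")
      case True
      then show ?thesis using gap_right[OF True] \<nu>.put_fn_ge[of x] by simp
    next
      case False
      then have "0 \<le> (1 - u) * (c - x)" using \<open>u < 1\<close> by simp
      then show ?thesis using gap_left[of x] False by simp
    qed
    show "0 < 1 - u" using \<open>u < 1\<close> by simp
    show "(1 - u) * (c - x) \<le> E_u \<mu> \<nu> G u x - ((1 - u) * x + b)" if "x \<le> c" for x
      using gap_left[OF that] .
    have "eventually (\<lambda>n. c \<le> real n) sequentially"
      using filterlim_real_sequentially by (simp add: filterlim_at_top)
    then have "eventually (\<lambda>n. put_fn \<nu> (real n) - real n + (\<integral>x. x \<partial>\<nu>)
        = E_u \<mu> \<nu> G u (real n) - ((1 - u) * real n + b)) sequentially"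
      by eventually_elim (simp add: gap_right)
    with \<nu>.call_tendsto_zero
    show "(\<lambda>n. E_u \<mu> \<nu> G u (real n) - ((1 - u) * real n + b)) \<longlonglongrightarrow> 0"
      by (rule Lim_transform_eventually)
  qed
qed

theorem lemma4p3:
  fixes \<mu> \<nu> :: "real measure" and G :: "real \<Rightarrow> real" and u :: real
  assumes "prob_space \<mu>" "sets \<mu> = sets borel" "integrable \<mu> (\<lambda>x. x)"
    and "prob_space \<nu>" "sets \<nu> = sets borel" "integrable \<nu> (\<lambda>x. x)"
    and "cx_le \<mu> \<nu>"
    and "is_interval {k. put_fn \<nu> k - put_fn \<mu> k > 0}"
    and "is_quantile \<mu> G"
    and "u \<in> {0<..<1}"
  shows "((\<lambda>y. (conv_minorant (E_u \<mu> \<nu> G u) y - conv_minorant (E_u \<mu> \<nu> G u) (G u)) / (y - G u))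
            \<longlongrightarrow> Inf (subdiff (conv_minorant (E_u \<mu> \<nu> G u)) (G u))) (at_left (G u))
      \<and> ((\<lambda>y. (conv_minorant (E_u \<mu> \<nu> G u) y
                 - conv_minorant (E_u \<mu> \<nu> G u) (Zf (E_u \<mu> \<nu> G u) (G u)))
               / (y - Zf (E_u \<mu> \<nu> G u) (G u)))
            \<longlongrightarrow> Inf (subdiff (conv_minorant (E_u \<mu> \<nu> G u)) (G u)))
          (at_left (Zf (E_u \<mu> \<nu> G u) (G u)))"
proof -
  have \<mu>: "integrable_real_distribution \<mu>" and \<nu>: "integrable_real_distribution \<nu>"
    using assms(1-6) by (simp_all add: integrable_real_distribution_def integrable_real_distribution_axioms_def
        real_distribution_def real_distribution_axioms_def)
  have quantile: "measure \<mu> {..<G u} \<le> u" "u \<le> measure \<mu> {..G u}" and "u < 1"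
    using assms(9,10) unfolding is_quantile_def by auto
  interpret line_asymptote "E_u \<mu> \<nu> G u" "1 - u" "u * G u - put_fn \<mu> (G u) - (\<integral>x. x \<partial>\<nu>)" "G u" "1 - u"
    by (rule line_asymptote_E_u[of \<mu> \<nu> G u, OF \<mu> \<nu> assms(7) quantile \<open>u < 1\<close>])
  show ?thesis
    using convex_left_slope_tendsto_Inf_subdiff[OF convex_\<Phi>] left_slope_tendsto_at_Zf by blast
qed

end
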